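(* Let $X,Y,Z$ be countable discrete metric spaces of bounded geometry, $d_{XY}\in D(X,Y)$, $d_{YZ}\in D(Y,Z)$. Then $M_{d_{XY}}(X,Y)\hat\otimes M_{d_{YZ}}(Y,Z)=M_{d_{YZ}\circ d_{XY}}(X,Z)$.
   Context: A discrete metric space $X$ has bounded geometry if for every $R>0$ the cardinalities $|B_R(x)|$ of balls of radius $R$ are finite and bounded uniformly in $x\in X$. $H_X=l^2(X)$ with basis $\{\delta_x\}$; for $T:H_X\to H_Y$ bounded, $T_{yx}=\langle T\delta_x,\delta_y\rangle$; $T$ has propagation less than $L$ w.r.t. $\rho$ if $T_{yx}=0$ whenever $\rho(x,y)\ge L$. $M_\rho(X,Y)$ is the norm closure in $\mathbb B(H_X,H_Y)$ of bounded operators of finite propagation w.r.t. $\rho$. $D(X,Y)$ is the set of metrics on $X\sqcup Y$ restricting to $d_X,d_Y$. $(d_{YZ}\circ d_{XY})$ is the metric on $X\sqcup Z$ equal to $d_X$, $d_Z$ on $X$, $Z$ and $(d_{YZ}\circ d_{XY})(x,z)=\inf_{y\in Y}(d_{XY}(x,y)+d_{YZ}(y,z))$. For closed subspaces $M\subset\mathbb B(H_X,H_Y)$, $N\subset\mathbb B(H_Y,H_Z)$, $M\hat\otimes N$ denotes the norm closure in $\mathbb B(H_X,H_Z)$ of the linear span of all $S\circ T$ with $T\in M$, $S\in N$. *)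

theory Defs
  imports "HOL-Analysis.Analysis"
begin

definition is_metric :: "('a \<Rightarrow> 'a \<Rightarrow> real) \<Rightarrow> bool" where
  "is_metric d \<longleftrightarrow>
     (\<forall>x y. 0 \<le> d x y) \<and> (\<forall>x y. d x y = 0 \<longleftrightarrow> x = y) \<and>
     (\<forall>x y. d x y = d y x) \<and> (\<forall>x y z. d x z \<le> d x y + d y z)"

definition bounded_geometry :: "('a \<Rightarrow> 'a \<Rightarrow> real) \<Rightarrow> bool" where
  "bounded_geometry d \<longleftrightarrow> is_metric d \<and>
     (\<forall>R>0. \<exists>N::nat. \<forall>x. finite {y. d x y \<le> R} \<and> card {y. d x y \<le> R} \<le> N)"

definition Dmetrics :: "('a \<Rightarrow> 'a \<Rightarrow> real) \<Rightarrow> ('b \<Rightarrow> 'b \<Rightarrow> real)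
    \<Rightarrow> (('a + 'b) \<Rightarrow> ('a + 'b) \<Rightarrow> real) set" where
  "Dmetrics dX dY = {\<rho>. is_metric \<rho> \<and> (\<forall>a b. \<rho> (Inl a) (Inl b) = dX a b)
                                    \<and> (\<forall>a b. \<rho> (Inr a) (Inr b) = dY a b)}"

definition metric_comp :: "(('x + 'y) \<Rightarrow> ('x + 'y) \<Rightarrow> real) \<Rightarrow> (('y + 'z) \<Rightarrow> ('y + 'z) \<Rightarrow> real)
    \<Rightarrow> ('x + 'z) \<Rightarrow> ('x + 'z) \<Rightarrow> real" where
  "metric_comp dXY dYZ p q =
     (case p of
        Inl x \<Rightarrow> (case q of
                    Inl x' \<Rightarrow> dXY (Inl x) (Inl x')
                  | Inr z \<Rightarrow> (INF y. dXY (Inl x) (Inr y) + dYZ (Inl y) (Inr z)))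
      | Inr z \<Rightarrow> (case q of
                    Inl x \<Rightarrow> (INF y. dXY (Inl x) (Inr y) + dYZ (Inl y) (Inr z))
                  | Inr z' \<Rightarrow> dYZ (Inr z) (Inr z')))"

definition l2 :: "('a \<Rightarrow> complex) set" where
  "l2 = {f. (\<lambda>x. (cmod (f x))^2) summable_on UNIV}"

definition l2norm :: "('a \<Rightarrow> complex) \<Rightarrow> real" where
  "l2norm f = sqrt (\<Sum>\<^sub>\<infinity>x. (cmod (f x))^2)"

text \<open>Bounded linear operators l^2(X) \<rightarrow> l^2(Y), represented as functions that are
  linear and bounded on l^2 and (canonically) zero outside l^2.\<close>
definition bdd_op :: "(('a \<Rightarrow> complex) \<Rightarrow> ('b \<Rightarrow> complex)) set" where
  "bdd_op = {T. (\<forall>f\<in>l2. T f \<in> l2) \<and>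
     (\<forall>f\<in>l2. \<forall>g\<in>l2. \<forall>a b. T (\<lambda>x. a * f x + b * g x) = (\<lambda>y. a * T f y + b * T g y)) \<and>
     (\<exists>C. \<forall>f\<in>l2. l2norm (T f) \<le> C * l2norm f) \<and>
     (\<forall>f. f \<notin> l2 \<longrightarrow> T f = (\<lambda>_. 0))}"

definition opnorm :: "(('a \<Rightarrow> complex) \<Rightarrow> ('b \<Rightarrow> complex)) \<Rightarrow> real" where
  "opnorm T = Sup {l2norm (T f) | f. f \<in> l2 \<and> l2norm f \<le> 1}"

definition norm_closure :: "(('a \<Rightarrow> complex) \<Rightarrow> ('b \<Rightarrow> complex)) set
    \<Rightarrow> (('a \<Rightarrow> complex) \<Rightarrow> ('b \<Rightarrow> complex)) set" where
  "norm_closure A = {T \<in> bdd_op. \<forall>e>0. \<exists>S\<in>A. opnorm (\<lambda>f. T f - S f) < e}"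

definition delta :: "'a \<Rightarrow> 'a \<Rightarrow> complex" where
  "delta x = (\<lambda>x'. if x' = x then 1 else 0)"

definition entry :: "(('a \<Rightarrow> complex) \<Rightarrow> ('b \<Rightarrow> complex)) \<Rightarrow> 'b \<Rightarrow> 'a \<Rightarrow> complex" where
  "entry T y x = T (delta x) y"

definition finite_propagation :: "(('a + 'b) \<Rightarrow> ('a + 'b) \<Rightarrow> real)
    \<Rightarrow> (('a \<Rightarrow> complex) \<Rightarrow> ('b \<Rightarrow> complex)) \<Rightarrow> bool" where
  "finite_propagation \<rho> T \<longleftrightarrow> (\<exists>L. \<forall>x y. \<rho> (Inl x) (Inr y) \<ge> L \<longrightarrow> entry T y x = 0)"

definition Mprop :: "(('a + 'b) \<Rightarrow> ('a + 'b) \<Rightarrow> real)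
    \<Rightarrow> (('a \<Rightarrow> complex) \<Rightarrow> ('b \<Rightarrow> complex)) set" where
  "Mprop \<rho> = norm_closure {T \<in> bdd_op. finite_propagation \<rho> T}"

definition op_cspan :: "(('a \<Rightarrow> complex) \<Rightarrow> ('b \<Rightarrow> complex)) set
    \<Rightarrow> (('a \<Rightarrow> complex) \<Rightarrow> ('b \<Rightarrow> complex)) set" where
  "op_cspan A = {(\<lambda>f y. \<Sum>i<n. c i * G i f y) | (n::nat) c G. \<forall>i<n. G i \<in> A}"

definition op_tensor :: "(('a \<Rightarrow> complex) \<Rightarrow> ('b \<Rightarrow> complex)) set
    \<Rightarrow> (('b \<Rightarrow> complex) \<Rightarrow> ('c \<Rightarrow> complex)) set
    \<Rightarrow> (('a \<Rightarrow> complex) \<Rightarrow> ('c \<Rightarrow> complex)) set" where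
  "op_tensor M N = norm_closure (op_cspan {S \<circ> T | S T. T \<in> M \<and> S \<in> N})"

end

theory Submission
  imports Defs
begin

text \<open>Products of finite-propagation operators \<open>X \<rightarrow> Y\<close> and \<open>Y \<rightarrow> Z\<close> have finite propagation for
  the composed metric, because bounded geometry of \<open>Y\<close> makes \<open>T \<delta>\<^sub>x\<close> a finite combination of
  \<open>\<delta>\<^sub>y\<close>'s with \<open>y\<close> near \<open>x\<close>; composition and linear combinations are continuous, which gives
  one inclusion.

  Conversely let \<open>T\<close> have propagation \<open>< L\<close> for the composed metric. Colour \<open>X\<close> and \<open>Z\<close>
  with finitely many colours so that distinct points at distance \<open>\<le> 2L\<close> get distinct colours
  (greedily, using bounded geometry). Inside one pair of colour classes the pairs \<open>(x, z)\<close>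
  with \<open>d(x, z) < L\<close> form a partial matching, and midpoints \<open>y\<close> with
  \<open>d(x, y) + d(y, z) < L\<close> are distinct for distinct pairs. So the corresponding block of \<open>T\<close>
  factors as \<open>\<delta>\<^sub>x \<mapsto> \<delta>\<^sub>y\<close> followed by \<open>\<delta>\<^sub>y \<mapsto> T\<^sub>z\<^sub>x \<delta>\<^sub>z\<close>, both bounded and of finite propagation,
  and \<open>T\<close> is the sum of its finitely many blocks.\<close>

section \<open>The sequence space l2\<close>

lemma l2_zero [simp]: "(\<lambda>_. 0) \<in> l2"
  by (simp add: l2_def)

lemma l2norm_zero [simp]: "l2norm (\<lambda>_. 0) = 0"
  by (simp add: l2norm_def)

lemma l2norm_nonneg: "0 \<le> l2norm f"
  unfolding l2norm_def by (simp add: infsum_nonneg)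

lemma sum_l2_le_infsum:
  "f \<in> l2 \<Longrightarrow> finite F \<Longrightarrow> (\<Sum>x\<in>F. (cmod (f x))^2) \<le> (\<Sum>\<^sub>\<infinity>x. (cmod (f x))^2)"
  by (rule finite_sum_le_infsum) (auto simp: l2_def)

lemma L2_set_le_l2norm: "f \<in> l2 \<Longrightarrow> finite F \<Longrightarrow> L2_set (\<lambda>x. cmod (f x)) F \<le> l2norm f"
  unfolding L2_set_def l2norm_def by (rule real_sqrt_le_mono) (rule sum_l2_le_infsum)

lemma norm_le_l2norm: "f \<in> l2 \<Longrightarrow> cmod (f x) \<le> l2norm f"
  using L2_set_le_l2norm[of f "{x}"] by simp

lemma l2norm_eq_0_imp: "f \<in> l2 \<Longrightarrow> l2norm f = 0 \<Longrightarrow> f = (\<lambda>_. 0)"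
  using norm_le_l2norm[of f] by fastforce

lemma l2_delta [simp]: "delta x \<in> l2"
proof -
  have "(\<lambda>y. (cmod (delta x y))^2) summable_on UNIV \<longleftrightarrow> (\<lambda>y. (cmod (delta x y))^2) summable_on {x}"
    by (rule summable_on_cong_neutral) (auto simp: delta_def)
  then show ?thesis by (simp add: l2_def)
qed

lemma l2norm_delta [simp]: "l2norm (delta x) = 1"
proof -
  have "(\<Sum>\<^sub>\<infinity>y. (cmod (delta x y))^2) = (\<Sum>\<^sub>\<infinity>y\<in>{x}. (cmod (delta x y))^2)"
    by (rule infsum_cong_neutral) (auto simp: delta_def)
  then show ?thesis by (simp add: l2norm_def delta_def)
qed

lemma l2_add:
  assumes "f \<in> l2" "g \<in> l2"
  shows "(\<lambda>x. f x + g x) \<in> l2"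
proof -
  have dom: "(\<lambda>x. 2 * (cmod (f x))^2 + 2 * (cmod (g x))^2) summable_on UNIV"
    using assms by (intro summable_on_add summable_on_cmult_right) (auto simp: l2_def)
  have "(cmod (f x + g x))^2 \<le> 2 * (cmod (f x))^2 + 2 * (cmod (g x))^2" for x
  proof -
    have "(cmod (f x + g x))^2 \<le> (cmod (f x) + cmod (g x))^2"
      by (simp add: norm_triangle_ineq power_mono)
    also have "\<dots> \<le> 2 * (cmod (f x))^2 + 2 * (cmod (g x))^2"
      using zero_le_power2[of "cmod (f x) - cmod (g x)"]
      unfolding power2_diff power2_sum by linarith
    finally show ?thesis .
  qed
  then show ?thesis
    unfolding l2_def by (auto intro!: summable_on_comparison_test[OF dom])
qed

lemma l2_scale: "f \<in> l2 \<Longrightarrow> (\<lambda>x. c * f x) \<in> l2"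
  using summable_on_cmult_right[of "\<lambda>x. (cmod (f x))^2" UNIV "(cmod c)^2"]
  by (simp add: l2_def norm_mult power_mult_distrib)

lemma l2_lincomb: "f \<in> l2 \<Longrightarrow> g \<in> l2 \<Longrightarrow> (\<lambda>x. a * f x + b * g x) \<in> l2"
  by (intro l2_add l2_scale)

lemma l2_diff: "f \<in> l2 \<Longrightarrow> g \<in> l2 \<Longrightarrow> (\<lambda>x. f x - g x) \<in> l2"
  using l2_lincomb[of f g 1 "-1"] by simp

lemma l2_sum: "finite I \<Longrightarrow> (\<And>i. i \<in> I \<Longrightarrow> g i \<in> l2) \<Longrightarrow> (\<lambda>x. \<Sum>i\<in>I. c i * g i x) \<in> l2"
  by (induction I rule: finite_induct) (auto intro: l2_lincomb[where b=1, simplified])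

lemma l2norm_triangle:
  assumes "f \<in> l2" "g \<in> l2"
  shows "l2norm (\<lambda>x. f x + g x) \<le> l2norm f + l2norm g"
proof -
  have "(\<Sum>\<^sub>\<infinity>x. (cmod (f x + g x))^2) \<le> (l2norm f + l2norm g)^2"
  proof (rule infsum_le_finite_sums)
    show "(\<lambda>x. (cmod (f x + g x))^2) summable_on UNIV"
      using l2_add[OF assms] by (simp add: l2_def)
    fix F :: "'a set" assume F: "finite F"
    have "L2_set (\<lambda>x. cmod (f x + g x)) F \<le> L2_set (\<lambda>x. cmod (f x) + cmod (g x)) F"
      by (rule L2_set_mono) (auto simp: norm_triangle_ineq)
    also have "\<dots> \<le> L2_set (\<lambda>x. cmod (f x)) F + L2_set (\<lambda>x. cmod (g x)) F"
      by (rule L2_set_triangle_ineq)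
    also have "\<dots> \<le> l2norm f + l2norm g"
      using L2_set_le_l2norm[OF assms(1) F] L2_set_le_l2norm[OF assms(2) F] by linarith
    finally have "(L2_set (\<lambda>x. cmod (f x + g x)) F)^2 \<le> (l2norm f + l2norm g)^2"
      by (intro power_mono L2_set_nonneg)
    then show "(\<Sum>x\<in>F. (cmod (f x + g x))^2) \<le> (l2norm f + l2norm g)^2"
      by (simp add: L2_set_def sum_nonneg)
  qed
  then have "l2norm (\<lambda>x. f x + g x) \<le> sqrt ((l2norm f + l2norm g)^2)"
    unfolding l2norm_def[of "\<lambda>x. f x + g x"] by (rule real_sqrt_le_mono)
  then show ?thesis
    using l2norm_nonneg[of f] l2norm_nonneg[of g] by simp
qed

lemma l2norm_scale: "l2norm (\<lambda>x. c * f x) = cmod c * l2norm f"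
proof -
  have "(\<Sum>\<^sub>\<infinity>x. (cmod (c * f x))^2) = (cmod c)^2 * (\<Sum>\<^sub>\<infinity>x. (cmod (f x))^2)"
    by (simp add: norm_mult power_mult_distrib infsum_cmult_right')
  then show ?thesis by (simp add: l2norm_def real_sqrt_mult)
qed

lemma l2_tail_small:
  assumes f: "f \<in> l2" and e: "e > 0"
  obtains F where "finite F" "l2norm (\<lambda>x. if x \<in> F then 0 else f x) < e"
proof -
  let ?h = "\<lambda>x. (cmod (f x))^2"
  let ?t = "\<lambda>F x. (cmod (if x \<in> F then 0 else f x))^2"
  have hs: "?h summable_on UNIV" using f by (simp add: l2_def)
  obtain F where F: "finite F" and close: "dist (sum ?h F) (infsum ?h UNIV) \<le> e^2/2"
    using infsum_finite_approximation[OF hs, of "e^2/2"] e by auto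
  have "infsum (?t F) UNIV \<le> e^2/2"
  proof (rule infsum_le_finite_sums)
    show "?t F summable_on UNIV"
      by (rule summable_on_comparison_test[OF hs]) auto
    fix G :: "'a set" assume G: "finite G"
    have "sum (?t F) G \<le> sum (?t F) (G \<union> F)"
      by (rule sum_mono2) (use G F in auto)
    also have "\<dots> = sum ?h (G \<union> F) - sum ?h F"
    proof -
      have "sum ?h (G \<union> F) = sum (\<lambda>x. ?t F x + (if x \<in> F then ?h x else 0)) (G \<union> F)"
        by (rule sum.cong) auto
      also have "\<dots> = sum (?t F) (G \<union> F) + sum ?h F"
        using G F by (simp add: sum.distrib sum.inter_restrict[symmetric] Int_absorb1)
      finally show ?thesis by simp
    qed
    also have "\<dots> \<le> infsum ?h UNIV - sum ?h F"
      using finite_sum_le_infsum[OF hs, of "G \<union> F"] G F by simp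
    also have "\<dots> \<le> e^2/2"
      using close unfolding dist_real_def abs_le_iff by linarith
    finally show "sum (?t F) G \<le> e^2/2" .
  qed
  then have "l2norm (\<lambda>x. if x \<in> F then 0 else f x) \<le> sqrt (e^2/2)"
    unfolding l2norm_def by (rule real_sqrt_le_mono)
  also have "\<dots> < e"
    using e real_sqrt_less_mono[of "e^2/2" "e^2"] by simp
  finally show thesis using F that by blast
qed

section \<open>Bounded operators and the operator norm\<close>

lemma bdd_opD:
  assumes "T \<in> bdd_op"
  shows bdd_op_l2: "\<And>f. f \<in> l2 \<Longrightarrow> T f \<in> l2"
    and bdd_op_lincomb: "\<And>f g a b. f \<in> l2 \<Longrightarrow> g \<in> l2 \<Longrightarrow>
           T (\<lambda>x. a * f x + b * g x) = (\<lambda>y. a * T f y + b * T g y)"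
    and bdd_op_bounded: "\<exists>C. \<forall>f\<in>l2. l2norm (T f) \<le> C * l2norm f"
    and bdd_op_outside_l2: "\<And>f. f \<notin> l2 \<Longrightarrow> T f = (\<lambda>_. 0)"
  using assms unfolding bdd_op_def by blast+

lemma bdd_opI:
  assumes "\<And>f. f \<in> l2 \<Longrightarrow> T f \<in> l2"
    and "\<And>f g a b. f \<in> l2 \<Longrightarrow> g \<in> l2 \<Longrightarrow> T (\<lambda>x. a * f x + b * g x) = (\<lambda>y. a * T f y + b * T g y)"
    and "\<And>f. f \<in> l2 \<Longrightarrow> l2norm (T f) \<le> C * l2norm f"
    and "\<And>f. f \<notin> l2 \<Longrightarrow> T f = (\<lambda>_. 0)"
  shows "T \<in> bdd_op"
  using assms unfolding bdd_op_def by blast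

lemma bdd_op_zero_arg: "T \<in> bdd_op \<Longrightarrow> T (\<lambda>_. 0) = (\<lambda>_. 0)"
  using bdd_op_lincomb[of T "\<lambda>_. 0" "\<lambda>_. 0" 0 0] by simp

lemma bdd_op_scale_arg: "T \<in> bdd_op \<Longrightarrow> f \<in> l2 \<Longrightarrow> T (\<lambda>x. c * f x) = (\<lambda>y. c * T f y)"
  using bdd_op_lincomb[of T f "\<lambda>_. 0" c 0] by (simp add: bdd_op_zero_arg)

lemma bdd_op_add_arg:
  "T \<in> bdd_op \<Longrightarrow> f \<in> l2 \<Longrightarrow> g \<in> l2 \<Longrightarrow> T (\<lambda>x. f x + g x) = (\<lambda>y. T f y + T g y)"
  using bdd_op_lincomb[of T f g 1 1] by simp

lemma bdd_op_diff_arg: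
  "T \<in> bdd_op \<Longrightarrow> f \<in> l2 \<Longrightarrow> g \<in> l2 \<Longrightarrow> T (\<lambda>x. f x - g x) = (\<lambda>y. T f y - T g y)"
  using bdd_op_lincomb[of T f g 1 "-1"] by simp

lemma bdd_op_sum_arg:
  assumes T: "T \<in> bdd_op"
  shows "finite I \<Longrightarrow> (\<And>i. i \<in> I \<Longrightarrow> g i \<in> l2) \<Longrightarrow>
     T (\<lambda>x. \<Sum>i\<in>I. c i * g i x) = (\<lambda>y. \<Sum>i\<in>I. c i * T (g i) y)"
proof (induction I rule: finite_induct)
  case empty
  then show ?case using bdd_op_zero_arg[OF T] by simp
next
  case (insert i I)
  have "T (\<lambda>x. \<Sum>i\<in>insert i I. c i * g i x) = T (\<lambda>x. c i * g i x + 1 * (\<Sum>i\<in>I. c i * g i x))"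
    using insert by simp
  also have "\<dots> = (\<lambda>y. c i * T (g i) y + 1 * T (\<lambda>x. \<Sum>i\<in>I. c i * g i x) y)"
    using insert l2_sum[of I g c] by (intro bdd_op_lincomb[OF T]) auto
  finally show ?case using insert by simp
qed

lemma opnorm_set_bdd_above:
  assumes "T \<in> bdd_op"
  shows "bdd_above {l2norm (T f) | f. f \<in> l2 \<and> l2norm f \<le> 1}"
proof -
  obtain C where C: "\<forall>f\<in>l2. l2norm (T f) \<le> C * l2norm f"
    using bdd_op_bounded[OF assms] by blast
  have "l2norm (T f) \<le> max C 0" if "f \<in> l2" "l2norm f \<le> 1" for f
  proof -
    have "l2norm (T f) \<le> C * l2norm f" using C that by blast
    also have "\<dots> \<le> max C 0 * l2norm f" by (simp add: mult_right_mono l2norm_nonneg)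
    also have "\<dots> \<le> max C 0" using that by (simp add: mult_left_le)
    finally show ?thesis .
  qed
  then show ?thesis unfolding bdd_above_def by blast
qed

lemma opnorm_le:
  assumes "\<And>f. f \<in> l2 \<Longrightarrow> l2norm f \<le> 1 \<Longrightarrow> l2norm (T f) \<le> C"
  shows "opnorm T \<le> C"
  unfolding opnorm_def
proof (rule cSup_least)
  show "{l2norm (T f) |f. f \<in> l2 \<and> l2norm f \<le> 1} \<noteq> {}"
    using l2_zero l2norm_zero by fastforce
qed (use assms in blast)

lemma opnorm_upper: "T \<in> bdd_op \<Longrightarrow> f \<in> l2 \<Longrightarrow> l2norm f \<le> 1 \<Longrightarrow> l2norm (T f) \<le> opnorm T"
  unfolding opnorm_def by (rule cSup_upper) (auto intro: opnorm_set_bdd_above)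

lemma opnorm_nonneg: "T \<in> bdd_op \<Longrightarrow> 0 \<le> opnorm T"
  using opnorm_upper[of T "\<lambda>_. 0"] l2norm_nonneg[of "T (\<lambda>_. 0)"] by simp

lemma norm_entry_le_opnorm:
  assumes "T \<in> bdd_op"
  shows "cmod (T (delta x) z) \<le> opnorm T"
proof -
  have "cmod (T (delta x) z) \<le> l2norm (T (delta x))"
    by (rule norm_le_l2norm[OF bdd_op_l2[OF assms l2_delta]])
  also have "\<dots> \<le> opnorm T" by (rule opnorm_upper) (use assms in auto)
  finally show ?thesis .
qed

lemma l2norm_le_opnorm:
  assumes T: "T \<in> bdd_op" and f: "f \<in> l2"
  shows "l2norm (T f) \<le> opnorm T * l2norm f"
proof (cases "l2norm f = 0")
  case True
  then show ?thesis using l2norm_eq_0_imp[OF f] bdd_op_zero_arg[OF T] by simp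
next
  case False
  define n where "n = l2norm f"
  have n: "n > 0" using False l2norm_nonneg[of f] n_def by simp
  let ?c = "complex_of_real (1/n)"
  have c: "cmod ?c = 1/n" using n by (simp add: norm_divide)
  have "l2norm (\<lambda>x. ?c * f x) = 1" using n by (simp only: l2norm_scale c) (simp add: n_def)
  then have "l2norm (T (\<lambda>x. ?c * f x)) \<le> opnorm T"
    by (intro opnorm_upper[OF T l2_scale[OF f]] eq_refl)
  then have "l2norm (T f) / n \<le> opnorm T"
    by (simp only: bdd_op_scale_arg[OF T f] l2norm_scale c) simp
  then show ?thesis
    using n by (simp add: n_def pos_divide_le_eq mult.commute)
qed

lemma bdd_op_zero: "(\<lambda>f. \<lambda>_. 0) \<in> bdd_op"
  by (rule bdd_opI[where C=0]) (auto simp: l2norm_nonneg)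

lemma bdd_op_add:
  assumes A: "A \<in> bdd_op" and B: "B \<in> bdd_op"
  shows "(\<lambda>f y. A f y + B f y) \<in> bdd_op"
proof (rule bdd_opI[where C="opnorm A + opnorm B"])
  fix f :: "'a \<Rightarrow> complex" assume f: "f \<in> l2"
  show "(\<lambda>y. A f y + B f y) \<in> l2" using bdd_op_l2[OF A f] bdd_op_l2[OF B f] by (rule l2_add)
  have "l2norm (\<lambda>y. A f y + B f y) \<le> l2norm (A f) + l2norm (B f)"
    using bdd_op_l2[OF A f] bdd_op_l2[OF B f] by (rule l2norm_triangle)
  also have "\<dots> \<le> (opnorm A + opnorm B) * l2norm f"
    using l2norm_le_opnorm[OF A f] l2norm_le_opnorm[OF B f] by (simp add: distrib_right)
  finally show "l2norm (\<lambda>y. A f y + B f y) \<le> (opnorm A + opnorm B) * l2norm f" .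
next
  fix f g :: "'a \<Rightarrow> complex" and a b assume f: "f \<in> l2" and g: "g \<in> l2"
  show "(\<lambda>y. A (\<lambda>x. a * f x + b * g x) y + B (\<lambda>x. a * f x + b * g x) y) =
        (\<lambda>y. a * (A f y + B f y) + b * (A g y + B g y))"
    using bdd_op_lincomb[OF A f g] bdd_op_lincomb[OF B f g] by (simp add: algebra_simps)
qed (use bdd_op_outside_l2[OF A] bdd_op_outside_l2[OF B] in simp)

lemma opnorm_add:
  assumes A: "A \<in> bdd_op" and B: "B \<in> bdd_op"
  shows "opnorm (\<lambda>f y. A f y + B f y) \<le> opnorm A + opnorm B"
proof (rule opnorm_le)
  fix f :: "'a \<Rightarrow> complex" assume f: "f \<in> l2" and "l2norm f \<le> 1"
  have "l2norm (\<lambda>y. A f y + B f y) \<le> l2norm (A f) + l2norm (B f)"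
    using bdd_op_l2[OF A f] bdd_op_l2[OF B f] by (rule l2norm_triangle)
  also have "\<dots> \<le> opnorm A + opnorm B"
    using opnorm_upper[OF A f] opnorm_upper[OF B f] \<open>l2norm f \<le> 1\<close> by (simp add: add_mono)
  finally show "l2norm (\<lambda>y. A f y + B f y) \<le> opnorm A + opnorm B" .
qed

lemma bdd_op_scale:
  assumes A: "A \<in> bdd_op"
  shows "(\<lambda>f y. c * A f y) \<in> bdd_op"
proof (rule bdd_opI[where C="cmod c * opnorm A"])
  fix f :: "'a \<Rightarrow> complex" assume f: "f \<in> l2"
  show "(\<lambda>y. c * A f y) \<in> l2" using bdd_op_l2[OF A f] by (rule l2_scale)
  show "l2norm (\<lambda>y. c * A f y) \<le> (cmod c * opnorm A) * l2norm f"
    using l2norm_le_opnorm[OF A f] by (simp add: l2norm_scale mult.assoc mult_left_mono)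
next
  fix f g :: "'a \<Rightarrow> complex" and a b assume f: "f \<in> l2" and g: "g \<in> l2"
  show "(\<lambda>y. c * A (\<lambda>x. a * f x + b * g x) y) = (\<lambda>y. a * (c * A f y) + b * (c * A g y))"
    using bdd_op_lincomb[OF A f g] by (simp add: algebra_simps)
qed (use bdd_op_outside_l2[OF A] in simp)

lemma opnorm_scale:
  assumes A: "A \<in> bdd_op"
  shows "opnorm (\<lambda>f y. c * A f y) \<le> cmod c * opnorm A"
proof (rule opnorm_le)
  fix f :: "'a \<Rightarrow> complex" assume f: "f \<in> l2" and "l2norm f \<le> 1"
  show "l2norm (\<lambda>y. c * A f y) \<le> cmod c * opnorm A"
    unfolding l2norm_scale using opnorm_upper[OF A f \<open>l2norm f \<le> 1\<close>] by (rule mult_left_mono) simp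
qed

lemma bdd_op_diff: "A \<in> bdd_op \<Longrightarrow> B \<in> bdd_op \<Longrightarrow> (\<lambda>f. A f - B f) \<in> bdd_op"
  using bdd_op_add[OF _ bdd_op_scale, of A B "-1"] by (simp add: fun_diff_def)

lemma bdd_op_comp:
  assumes A: "A \<in> bdd_op" and B: "B \<in> bdd_op"
  shows "B \<circ> A \<in> bdd_op"
proof (rule bdd_opI[where C="opnorm B * opnorm A"])
  fix f :: "'a \<Rightarrow> complex" assume f: "f \<in> l2"
  show "(B \<circ> A) f \<in> l2" using f A B by (simp add: bdd_op_l2)
  have "l2norm (B (A f)) \<le> opnorm B * l2norm (A f)"
    using B bdd_op_l2[OF A f] by (rule l2norm_le_opnorm)
  also have "\<dots> \<le> opnorm B * (opnorm A * l2norm f)"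
    using l2norm_le_opnorm[OF A f] opnorm_nonneg[OF B] by (rule mult_left_mono)
  finally show "l2norm ((B \<circ> A) f) \<le> (opnorm B * opnorm A) * l2norm f"
    by (simp add: mult.assoc)
next
  fix f g :: "'a \<Rightarrow> complex" and a b assume f: "f \<in> l2" and g: "g \<in> l2"
  show "(B \<circ> A) (\<lambda>x. a * f x + b * g x) = (\<lambda>y. a * (B \<circ> A) f y + b * (B \<circ> A) g y)"
    using bdd_op_lincomb[OF A f g] bdd_op_lincomb[OF B bdd_op_l2[OF A f] bdd_op_l2[OF A g]] by simp
qed (use bdd_op_outside_l2[OF A] bdd_op_zero_arg[OF B] in simp)

lemma opnorm_comp:
  assumes A: "A \<in> bdd_op" and B: "B \<in> bdd_op"
  shows "opnorm (B \<circ> A) \<le> opnorm B * opnorm A"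
proof (rule opnorm_le)
  fix f :: "'a \<Rightarrow> complex" assume f: "f \<in> l2" and "l2norm f \<le> 1"
  have "l2norm (B (A f)) \<le> opnorm B * l2norm (A f)"
    using B bdd_op_l2[OF A f] by (rule l2norm_le_opnorm)
  also have "\<dots> \<le> opnorm B * opnorm A"
    using opnorm_upper[OF A f \<open>l2norm f \<le> 1\<close>] opnorm_nonneg[OF B] by (rule mult_left_mono)
  finally show "l2norm ((B \<circ> A) f) \<le> opnorm B * opnorm A" by simp
qed

lemma opnorm_diff_triangle:
  assumes "A \<in> bdd_op" "B \<in> bdd_op" "C \<in> bdd_op"
  shows "opnorm (\<lambda>f. A f - C f) \<le> opnorm (\<lambda>f. A f - B f) + opnorm (\<lambda>f. B f - C f)"
proof -
  have "(\<lambda>f. A f - C f) = (\<lambda>f y. (\<lambda>f. A f - B f) f y + (\<lambda>f. B f - C f) f y)"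
    by (auto simp: fun_eq_iff)
  then show ?thesis
    using opnorm_add[OF bdd_op_diff[OF assms(1,2)] bdd_op_diff[OF assms(2,3)]] by simp
qed

lemma opnorm_le_opnorm_add_dist:
  assumes A: "A \<in> bdd_op" and B: "B \<in> bdd_op"
  shows "opnorm B \<le> opnorm A + opnorm (\<lambda>f. A f - B f)"
proof -
  let ?D = "\<lambda>f. A f - B f"
  have D: "?D \<in> bdd_op" by (rule bdd_op_diff[OF A B])
  have B_eq: "(\<lambda>f y. A f y + (\<lambda>f y. (-1) * ?D f y) f y) = B"
    by (auto simp: fun_eq_iff)
  have "opnorm (\<lambda>f y. A f y + (\<lambda>f y. (-1) * ?D f y) f y) \<le> opnorm A + opnorm (\<lambda>f y. (-1) * ?D f y)"
    by (rule opnorm_add[OF A bdd_op_scale[OF D]])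
  also have "opnorm (\<lambda>f y. (-1) * ?D f y) \<le> opnorm ?D"
    using opnorm_scale[OF D, of "-1"] by simp
  finally show ?thesis by (simp only: B_eq)
qed

section \<open>Norm closures of operator subspaces\<close>

definition op_subspace :: "(('a \<Rightarrow> complex) \<Rightarrow> ('b \<Rightarrow> complex)) set \<Rightarrow> bool" where
  "op_subspace A \<longleftrightarrow> A \<subseteq> bdd_op \<and> (\<lambda>f. \<lambda>_. 0) \<in> A \<and>
     (\<forall>S\<in>A. \<forall>T\<in>A. (\<lambda>f y. S f y + T f y) \<in> A) \<and> (\<forall>S\<in>A. \<forall>c. (\<lambda>f y. c * S f y) \<in> A)"

lemma op_subspaceD:
  assumes "op_subspace A"
  shows "A \<subseteq> bdd_op" "(\<lambda>f. \<lambda>_. 0) \<in> A"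
    and "S \<in> A \<Longrightarrow> T \<in> A \<Longrightarrow> (\<lambda>f y. S f y + T f y) \<in> A"
    and "S \<in> A \<Longrightarrow> (\<lambda>f y. c * S f y) \<in> A"
  using assms unfolding op_subspace_def by blast+

lemma op_subspace_bdd_op: "op_subspace bdd_op"
  unfolding op_subspace_def by (blast intro: bdd_op_zero bdd_op_add bdd_op_scale)

lemma op_cspan_subset:
  assumes A: "op_subspace A" and B: "B \<subseteq> A"
  shows "op_cspan B \<subseteq> A"
proof
  fix U assume "U \<in> op_cspan B"
  then obtain n :: nat and c G where U: "U = (\<lambda>f y. \<Sum>i<n. c i * G i f y)" and G: "\<forall>i<n. G i \<in> B"
    unfolding op_cspan_def by blast
  have "(\<lambda>f y. \<Sum>i<m. c i * G i f y) \<in> A" if "m \<le> n" for m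
    using that
  proof (induction m)
    case 0
    then show ?case using op_subspaceD(2)[OF A] by simp
  next
    case (Suc m)
    then have "G m \<in> A" using G B by auto
    then have "(\<lambda>f y. c m * G m f y) \<in> A" by (rule op_subspaceD(4)[OF A])
    from op_subspaceD(3)[OF A _ this] show ?case using Suc by simp
  qed
  then show "U \<in> A" by (simp add: U)
qed

lemma norm_closure_subset_bdd_op: "norm_closure A \<subseteq> bdd_op"
  unfolding norm_closure_def by auto

lemma norm_closureD: "T \<in> norm_closure A \<Longrightarrow> e > 0 \<Longrightarrow> \<exists>S\<in>A. opnorm (\<lambda>f. T f - S f) < e"
  unfolding norm_closure_def by blast

lemma norm_closure_mono: "A \<subseteq> B \<Longrightarrow> norm_closure A \<subseteq> norm_closure B"
  unfolding norm_closure_def by blast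

lemma subset_norm_closure: "A \<subseteq> bdd_op \<Longrightarrow> A \<subseteq> norm_closure A"
proof
  fix T assume "A \<subseteq> bdd_op" "T \<in> A"
  moreover have "opnorm (\<lambda>f. T f - T f) \<le> 0"
    by (rule opnorm_le) (simp add: fun_diff_def)
  ultimately show "T \<in> norm_closure A"
    unfolding norm_closure_def by (auto intro!: bexI[of _ T])
qed

lemma norm_closure_norm_closure:
  assumes "A \<subseteq> bdd_op"
  shows "norm_closure (norm_closure A) = norm_closure A"
proof
  show "norm_closure A \<subseteq> norm_closure (norm_closure A)"
    by (rule subset_norm_closure[OF norm_closure_subset_bdd_op])
  show "norm_closure (norm_closure A) \<subseteq> norm_closure A"
  proof
    fix T assume T: "T \<in> norm_closure (norm_closure A)"
    have "\<exists>R\<in>A. opnorm (\<lambda>f. T f - R f) < e" if "e > 0" for e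
    proof -
      obtain S where S: "S \<in> norm_closure A" "opnorm (\<lambda>f. T f - S f) < e/2"
        using norm_closureD[OF T, of "e/2"] \<open>e > 0\<close> by auto
      obtain R where R: "R \<in> A" "opnorm (\<lambda>f. S f - R f) < e/2"
        using norm_closureD[OF S(1), of "e/2"] \<open>e > 0\<close> by auto
      have "opnorm (\<lambda>f. T f - R f) \<le> opnorm (\<lambda>f. T f - S f) + opnorm (\<lambda>f. S f - R f)"
        using T S(1) R(1) assms norm_closure_subset_bdd_op by (intro opnorm_diff_triangle) auto
      then show ?thesis using S R by (intro bexI[of _ R]) auto
    qed
    then show "T \<in> norm_closure A"
      using T norm_closure_subset_bdd_op unfolding norm_closure_def by blast
  qed
qed

lemma norm_closure_add:
  assumes A: "op_subspace A" and S: "S \<in> norm_closure A" and T: "T \<in> norm_closure A"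
  shows "(\<lambda>f y. S f y + T f y) \<in> norm_closure A"
proof -
  have Sb: "S \<in> bdd_op" and Tb: "T \<in> bdd_op"
    using S T norm_closure_subset_bdd_op by blast+
  have "\<exists>R\<in>A. opnorm (\<lambda>f. (\<lambda>y. S f y + T f y) - R f) < e" if "e > 0" for e
  proof -
    obtain S' where S': "S' \<in> A" "opnorm (\<lambda>f. S f - S' f) < e/2"
      using norm_closureD[OF S, of "e/2"] \<open>e > 0\<close> by auto
    obtain T' where T': "T' \<in> A" "opnorm (\<lambda>f. T f - T' f) < e/2"
      using norm_closureD[OF T, of "e/2"] \<open>e > 0\<close> by auto
    have "(\<lambda>f. (\<lambda>y. S f y + T f y) - (\<lambda>y. S' f y + T' f y)) =
          (\<lambda>f y. (\<lambda>f. S f - S' f) f y + (\<lambda>f. T f - T' f) f y)"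
      by (auto simp: fun_eq_iff)
    moreover have "opnorm (\<lambda>f y. (\<lambda>f. S f - S' f) f y + (\<lambda>f. T f - T' f) f y) \<le>
        opnorm (\<lambda>f. S f - S' f) + opnorm (\<lambda>f. T f - T' f)"
      using S' T' op_subspaceD(1)[OF A] by (intro opnorm_add bdd_op_diff Sb Tb) auto
    ultimately show ?thesis
      using S' T' op_subspaceD(3)[OF A] by (intro bexI[of _ "\<lambda>f y. S' f y + T' f y"]) auto
  qed
  then show ?thesis
    using bdd_op_add[OF Sb Tb] unfolding norm_closure_def by blast
qed

lemma norm_closure_scale:
  assumes A: "op_subspace A" and T: "T \<in> norm_closure A"
  shows "(\<lambda>f y. c * T f y) \<in> norm_closure A"
proof -
  have Tb: "T \<in> bdd_op" using T norm_closure_subset_bdd_op by blast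
  have c: "0 < cmod c + 1" using norm_ge_zero[of c] by linarith
  have "\<exists>R\<in>A. opnorm (\<lambda>f. (\<lambda>y. c * T f y) - R f) < e" if e: "e > 0" for e
  proof -
    obtain S where S: "S \<in> A" "opnorm (\<lambda>f. T f - S f) < e / (cmod c + 1)"
      using norm_closureD[OF T, of "e / (cmod c + 1)"] e c by auto
    have D: "(\<lambda>f. T f - S f) \<in> bdd_op"
      using S(1) op_subspaceD(1)[OF A] Tb by (auto intro: bdd_op_diff)
    have "(\<lambda>f. (\<lambda>y. c * T f y) - (\<lambda>y. c * S f y)) = (\<lambda>f y. c * (\<lambda>f. T f - S f) f y)"
      by (auto simp: fun_eq_iff algebra_simps)
    moreover have "opnorm (\<lambda>f y. c * (\<lambda>f. T f - S f) f y) \<le> (cmod c + 1) * opnorm (\<lambda>f. T f - S f)"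
      using opnorm_scale[OF D, of c] opnorm_nonneg[OF D] by (simp add: distrib_right)
    moreover have "(cmod c + 1) * opnorm (\<lambda>f. T f - S f) < e"
      using S(2) c by (simp add: pos_less_divide_eq mult.commute)
    ultimately show ?thesis
      using S op_subspaceD(4)[OF A] by (intro bexI[of _ "\<lambda>f y. c * S f y"]) auto
  qed
  then show ?thesis
    using bdd_op_scale[OF Tb] unfolding norm_closure_def by blast
qed

lemma op_subspace_norm_closure:
  assumes A: "op_subspace A"
  shows "op_subspace (norm_closure A)"
  unfolding op_subspace_def
proof (intro conjI ballI allI)
  show "norm_closure A \<subseteq> bdd_op" by (rule norm_closure_subset_bdd_op)
  show "(\<lambda>f. \<lambda>_. 0) \<in> norm_closure A"
    using subset_norm_closure[OF op_subspaceD(1)[OF A]] op_subspaceD(2)[OF A] by blast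
next
  fix S T assume "S \<in> norm_closure A" "T \<in> norm_closure A"
  then show "(\<lambda>f y. S f y + T f y) \<in> norm_closure A" by (rule norm_closure_add[OF A])
next
  fix S c assume "S \<in> norm_closure A"
  then show "(\<lambda>f y. c * S f y) \<in> norm_closure A" by (rule norm_closure_scale[OF A])
qed

lemma comp_diff_eq:
  assumes S: "S \<in> bdd_op" and T: "T \<in> bdd_op" and T': "T' \<in> bdd_op"
  shows "(\<lambda>f. (S \<circ> T) f - (S' \<circ> T') f) =
    (\<lambda>f y. (S \<circ> (\<lambda>f. T f - T' f)) f y + ((\<lambda>f. S f - S' f) \<circ> T') f y)"
proof
  fix f
  show "(S \<circ> T) f - (S' \<circ> T') f = (\<lambda>y. (S \<circ> (\<lambda>f. T f - T' f)) f y + ((\<lambda>f. S f - S' f) \<circ> T') f y)"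
  proof (cases "f \<in> l2")
    case True
    have "S (T f - T' f) = (\<lambda>y. S (T f) y - S (T' f) y)"
      using bdd_op_diff_arg[OF S bdd_op_l2[OF T True] bdd_op_l2[OF T' True]]
      by (simp add: fun_diff_def)
    then show ?thesis by (auto simp: fun_eq_iff)
  next
    case False
    then show ?thesis
      using bdd_op_outside_l2[OF T] bdd_op_outside_l2[OF T'] bdd_op_zero_arg[OF S]
      by (simp add: fun_diff_def)
  qed
qed

lemma comp_mem_norm_closure:
  assumes A: "A \<subseteq> bdd_op" and B: "B \<subseteq> bdd_op"
    and comp: "\<And>T' S'. T' \<in> A \<Longrightarrow> S' \<in> B \<Longrightarrow> S' \<circ> T' \<in> C"
    and T: "T \<in> norm_closure A" and S: "S \<in> norm_closure B"
  shows "S \<circ> T \<in> norm_closure C"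
proof -
  have Tb: "T \<in> bdd_op" and Sb: "S \<in> bdd_op"
    using T S norm_closure_subset_bdd_op by blast+
  define a where "a = opnorm S"
  define b where "b = opnorm T"
  have a: "a \<ge> 0" and b: "b \<ge> 0"
    using opnorm_nonneg Sb Tb by (auto simp: a_def b_def)
  have "\<exists>R\<in>C. opnorm (\<lambda>f. (S \<circ> T) f - R f) < e" if e: "e > 0" for e
  proof -
    \<comment> \<open>\<open>\<parallel>ST - S'T'\<parallel> \<le> \<parallel>S\<parallel> \<parallel>T - T'\<parallel> + \<parallel>S - S'\<parallel> \<parallel>T'\<parallel>\<close>, and \<open>d1 \<le> 1\<close> keeps \<open>\<parallel>T'\<parallel> \<le> \<parallel>T\<parallel> + 1\<close>\<close>
    define d1 where "d1 = min 1 (e / (2 * (a + 1)))"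
    define d2 where "d2 = e / (2 * (b + 2))"
    have "d1 > 0" "d2 > 0" using e a b by (simp_all add: d1_def d2_def)
    then obtain T' S' where T': "T' \<in> A" "opnorm (\<lambda>f. T f - T' f) < d1"
      and S': "S' \<in> B" "opnorm (\<lambda>f. S f - S' f) < d2"
      using norm_closureD[OF T] norm_closureD[OF S] by meson
    have T'b: "T' \<in> bdd_op" and S'b: "S' \<in> bdd_op" using T' S' A B by auto
    have DT: "(\<lambda>f. T f - T' f) \<in> bdd_op" and DS: "(\<lambda>f. S f - S' f) \<in> bdd_op"
      using bdd_op_diff Tb T'b Sb S'b by auto
    have nT': "opnorm T' \<le> b + 1"
      using opnorm_le_opnorm_add_dist[OF Tb T'b] T'(2) by (simp add: b_def d1_def)
    have "opnorm (\<lambda>f. (S \<circ> T) f - (S' \<circ> T') f) \<le>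
        opnorm (S \<circ> (\<lambda>f. T f - T' f)) + opnorm ((\<lambda>f. S f - S' f) \<circ> T')"
      unfolding comp_diff_eq[OF Sb Tb T'b]
      by (rule opnorm_add[OF bdd_op_comp[OF DT Sb] bdd_op_comp[OF T'b DS]])
    also have "\<dots> \<le> a * opnorm (\<lambda>f. T f - T' f) + opnorm (\<lambda>f. S f - S' f) * opnorm T'"
      unfolding a_def using opnorm_comp[OF DT Sb] opnorm_comp[OF T'b DS] by (rule add_mono)
    also have "\<dots> \<le> a * d1 + d2 * (b + 1)"
      using T'(2) S'(2) nT' a opnorm_nonneg[OF DS] opnorm_nonneg[OF DT] opnorm_nonneg[OF T'b]
      by (intro add_mono mult_mono) auto
    also have "\<dots> < e"
    proof -
      have "a * d1 \<le> a * (e / (2 * (a + 1)))" using a by (intro mult_left_mono) (auto simp: d1_def)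
      also have "\<dots> < e / 2" using a e by (simp add: field_simps)
      finally have "a * d1 < e / 2" .
      moreover have "d2 * (b + 1) < e / 2" using b e by (simp add: d2_def field_simps)
      ultimately show ?thesis by linarith
    qed
    finally show ?thesis using comp[OF T'(1) S'(1)] by blast
  qed
  then show ?thesis
    using bdd_op_comp[OF Tb Sb] unfolding norm_closure_def by blast
qed

section \<open>Operators are determined by their matrix entries\<close>

lemma sum_mult_delta: "finite F \<Longrightarrow> (\<Sum>i\<in>F. f i * delta i x) = (if x \<in> F then f x else 0)"
  by (simp add: delta_def if_distrib[of "(*) _"] sum.delta cong: if_cong)

lemma bdd_op_eq_zero_if_delta_zero:
  assumes D: "D \<in> bdd_op" and zero: "\<And>x. D (delta x) = (\<lambda>_. 0)"
  shows "D f = (\<lambda>_. 0)"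
proof (cases "f \<in> l2")
  case False
  then show ?thesis by (rule bdd_op_outside_l2[OF D])
next
  case f: True
  have "cmod (D f z) \<le> e" if e: "e > 0" for z e
  proof -
    have "e / (opnorm D + 1) > 0" using e opnorm_nonneg[OF D] by (simp add: add_nonneg_pos)
    then obtain F where F: "finite F" and tail: "l2norm (\<lambda>x. if x \<in> F then 0 else f x) < e / (opnorm D + 1)"
      using l2_tail_small[OF f] by blast
    define g where "g = (\<lambda>x. \<Sum>i\<in>F. f i * delta i x)"
    define t where "t = (\<lambda>x. if x \<in> F then 0 else f x)"
    have g: "g \<in> l2" unfolding g_def using F by (intro l2_sum) auto
    have f_eq: "f = (\<lambda>x. g x + t x)" using F by (auto simp: g_def t_def sum_mult_delta)
    then have t: "t \<in> l2" using l2_diff[OF f g] by (simp add: fun_eq_iff)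
    have "D g = (\<lambda>_. 0)" unfolding g_def using bdd_op_sum_arg[OF D F, of delta f] zero by simp
    then have "D f z = D t z" unfolding f_eq bdd_op_add_arg[OF D g t] by simp
    also have "cmod (D t z) \<le> opnorm D * l2norm t"
      using norm_le_l2norm[OF bdd_op_l2[OF D t]] l2norm_le_opnorm[OF D t] by (rule order_trans)
    also have "\<dots> \<le> (opnorm D + 1) * (e / (opnorm D + 1))"
      using tail opnorm_nonneg[OF D] l2norm_nonneg[of t] unfolding t_def by (intro mult_mono) auto
    also have "\<dots> = e" using opnorm_nonneg[OF D] by simp
    finally show ?thesis .
  qed
  then have "cmod (D f z) = 0" for z
    using field_le_epsilon[of "cmod (D f z)" 0] by (simp add: order_antisym)
  then show ?thesis by auto
qed

lemma bdd_op_eqI_delta: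
  assumes A: "A \<in> bdd_op" and B: "B \<in> bdd_op" and eq: "\<And>x. A (delta x) = B (delta x)"
  shows "A = B"
proof
  fix f
  have "(\<lambda>f. A f - B f) f = (\<lambda>_. 0)"
    by (rule bdd_op_eq_zero_if_delta_zero[OF bdd_op_diff[OF A B]]) (simp add: eq fun_diff_def)
  then show "A f = B f" by (auto simp: fun_eq_iff)
qed

section \<open>Weighted pullbacks along partial injections\<close>

definition weighted_pullback ::
    "('b \<Rightarrow> 'a option) \<Rightarrow> ('b \<Rightarrow> complex) \<Rightarrow> ('a \<Rightarrow> complex) \<Rightarrow> ('b \<Rightarrow> complex)" where
  "weighted_pullback \<sigma> w f =
     (if f \<in> l2 then (\<lambda>z. case \<sigma> z of None \<Rightarrow> 0 | Some x \<Rightarrow> w z * f x) else (\<lambda>_. 0))"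

lemma weighted_pullback_delta:
  "weighted_pullback \<sigma> w (delta x) z = (if \<sigma> z = Some x then w z else 0)"
  by (simp add: weighted_pullback_def) (simp add: delta_def split: option.split)

lemma sum_weighted_pullback_le:
  assumes inj: "inj_on \<sigma> (dom \<sigma>)" and w: "\<And>z. cmod (w z) \<le> M"
    and f: "f \<in> l2" and G: "finite G"
  shows "(\<Sum>z\<in>G. (cmod (weighted_pullback \<sigma> w f z))^2) \<le> M^2 * (\<Sum>\<^sub>\<infinity>x. (cmod (f x))^2)"
proof -
  let ?s = "\<lambda>z. the (\<sigma> z)"
  have inj_s: "inj_on ?s (G \<inter> dom \<sigma>)"
    using inj by (auto simp: inj_on_def dom_def)
  have "(\<Sum>z\<in>G. (cmod (weighted_pullback \<sigma> w f z))^2) \<le>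
        (\<Sum>z\<in>G. if z \<in> dom \<sigma> then M^2 * (cmod (f (?s z)))^2 else 0)"
  proof (rule sum_mono)
    fix z
    have "(cmod (w z * f x))^2 \<le> M^2 * (cmod (f x))^2" for x
      using w[of z] by (simp add: norm_mult power_mult_distrib mult_right_mono power_mono)
    then show "(cmod (weighted_pullback \<sigma> w f z))^2 \<le> (if z \<in> dom \<sigma> then M^2 * (cmod (f (?s z)))^2 else 0)"
      using f by (cases "\<sigma> z") (auto simp: weighted_pullback_def)
  qed
  also have "\<dots> = (\<Sum>z\<in>G \<inter> dom \<sigma>. M^2 * (cmod (f (?s z)))^2)"
    using G by (simp add: sum.inter_restrict)
  also have "\<dots> = M^2 * (\<Sum>z\<in>G \<inter> dom \<sigma>. (cmod (f (?s z)))^2)"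
    by (simp add: sum_distrib_left)
  also have "(\<Sum>z\<in>G \<inter> dom \<sigma>. (cmod (f (?s z)))^2) = (\<Sum>x\<in>?s ` (G \<inter> dom \<sigma>). (cmod (f x))^2)"
    using sum.reindex[OF inj_s, of "\<lambda>x. (cmod (f x))^2"] by simp
  also have "M^2 * \<dots> \<le> M^2 * (\<Sum>\<^sub>\<infinity>x. (cmod (f x))^2)"
    using G by (intro mult_left_mono sum_l2_le_infsum f) auto
  finally show ?thesis .
qed

lemma bdd_op_weighted_pullback:
  fixes \<sigma> :: "'b \<Rightarrow> 'a option"
  assumes inj: "inj_on \<sigma> (dom \<sigma>)" and w: "\<And>z. cmod (w z) \<le> M"
  shows "weighted_pullback \<sigma> w \<in> bdd_op"
proof (rule bdd_opI[where C=M])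
  have M: "M \<ge> 0" using w norm_ge_zero order_trans by blast
  fix f :: "'a \<Rightarrow> complex" assume f: "f \<in> l2"
  note bound = sum_weighted_pullback_le[where w=w and M=M, OF inj w f]
  have "bdd_above (sum (\<lambda>z. (cmod (weighted_pullback \<sigma> w f z))^2) ` {G. G \<subseteq> UNIV \<and> finite G})"
    using bound by (intro bdd_aboveI) auto
  then show pb: "weighted_pullback \<sigma> w f \<in> l2"
    unfolding l2_def by (auto intro: nonneg_bdd_above_summable_on)
  have "(\<Sum>\<^sub>\<infinity>z. (cmod (weighted_pullback \<sigma> w f z))^2) \<le> M^2 * (\<Sum>\<^sub>\<infinity>x. (cmod (f x))^2)"
    using pb bound unfolding l2_def by (intro infsum_le_finite_sums) auto
  then have "l2norm (weighted_pullback \<sigma> w f) \<le> sqrt (M^2 * (\<Sum>\<^sub>\<infinity>x. (cmod (f x))^2))"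
    unfolding l2norm_def by (rule real_sqrt_le_mono)
  then show "l2norm (weighted_pullback \<sigma> w f) \<le> M * l2norm f"
    using M by (simp add: l2norm_def real_sqrt_mult)
next
  fix f g :: "'a \<Rightarrow> complex" and a b assume "f \<in> l2" "g \<in> l2"
  then show "weighted_pullback \<sigma> w (\<lambda>x. a * f x + b * g x) =
      (\<lambda>y. a * weighted_pullback \<sigma> w f y + b * weighted_pullback \<sigma> w g y)"
    by (auto simp: weighted_pullback_def l2_lincomb algebra_simps fun_eq_iff split: option.splits)
qed (simp add: weighted_pullback_def)

lemma weighted_pullback_comp:
  assumes "inj_on \<tau> (dom \<tau>)"
  shows "weighted_pullback \<sigma> w \<circ> weighted_pullback \<tau> (\<lambda>_. 1) = weighted_pullback (\<lambda>z. Option.bind (\<sigma> z) \<tau>) w"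
proof
  fix f
  have "weighted_pullback \<tau> (\<lambda>_. 1) f \<in> l2"
  proof (cases "f \<in> l2")
    case True
    then show ?thesis using bdd_op_l2[OF bdd_op_weighted_pullback[OF assms, of "\<lambda>_. 1" 1]] by simp
  qed (simp add: weighted_pullback_def)
  then show "(weighted_pullback \<sigma> w \<circ> weighted_pullback \<tau> (\<lambda>_. 1)) f = weighted_pullback (\<lambda>z. Option.bind (\<sigma> z) \<tau>) w f"
    by (auto simp: weighted_pullback_def fun_eq_iff split: option.splits)
qed

definition the_related :: "('a \<Rightarrow> 'b \<Rightarrow> bool) \<Rightarrow> 'b \<Rightarrow> 'a option" where
  "the_related R b = (if \<exists>!a. R a b then Some (THE a. R a b) else None)"

lemma the_related_eq_Some_iff:
  assumes "\<And>a a'. R a b \<Longrightarrow> R a' b \<Longrightarrow> a = a'"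
  shows "the_related R b = Some a \<longleftrightarrow> R a b"
  using assms by (auto simp: the_related_def intro: the_equality theI)

lemma the_related_eq_None: "\<not> (\<exists>a. R a b) \<Longrightarrow> the_related R b = None"
  by (auto simp: the_related_def)

lemma inj_on_dom_the_related:
  assumes left_unique: "\<And>a a' b. R a b \<Longrightarrow> R a' b \<Longrightarrow> a = a'"
    and right_unique: "\<And>a b b'. R a b \<Longrightarrow> R a b' \<Longrightarrow> b = b'"
  shows "inj_on (the_related R) (dom (the_related R))"
proof (rule inj_onI)
  fix b b' assume "b \<in> dom (the_related R)" "the_related R b = the_related R b'"
  then obtain a where "the_related R b = Some a" "the_related R b' = Some a" by (metis domD)
  then have "R a b" "R a b'"
    using the_related_eq_Some_iff[of R] left_unique by blast+
  then show "b = b'" by (rule right_unique)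
qed

text \<open>If \<open>P\<close> is a partial bijection between \<open>X\<close> and \<open>Z\<close> and \<open>\<phi>\<close> picks for each matched pair
  a point of \<open>Y\<close>, injectively, then the matrix \<open>a\<close> cut down to \<open>P\<close> factors as \<open>S \<circ> V\<close>, where
  \<open>V\<close> sends \<open>\<delta>\<^sub>x\<close> to \<open>\<delta>\<^bsub>\<phi> x z\<^esub>\<close> and \<open>S\<close> sends \<open>\<delta>\<^bsub>\<phi> x z\<^esub>\<close> to \<open>a x z \<delta>\<^sub>z\<close>.\<close>

lemma matching_factorization:
  fixes P :: "'x \<Rightarrow> 'z \<Rightarrow> bool" and \<phi> :: "'x \<Rightarrow> 'z \<Rightarrow> 'y" and a :: "'x \<Rightarrow> 'z \<Rightarrow> complex"
  assumes unique_x: "\<And>x x' z. P x z \<Longrightarrow> P x' z \<Longrightarrow> x = x'"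
    and unique_z: "\<And>x z z'. P x z \<Longrightarrow> P x z' \<Longrightarrow> z = z'"
    and inj_\<phi>: "\<And>x x' z z'. P x z \<Longrightarrow> P x' z' \<Longrightarrow> \<phi> x z = \<phi> x' z' \<Longrightarrow> x = x'"
    and bounded: "\<And>x z. cmod (a x z) \<le> M"
  obtains V :: "('x \<Rightarrow> complex) \<Rightarrow> ('y \<Rightarrow> complex)" and S :: "('y \<Rightarrow> complex) \<Rightarrow> ('z \<Rightarrow> complex)"
  where "V \<in> bdd_op" "S \<in> bdd_op"
    "\<And>x y. V (delta x) y \<noteq> 0 \<Longrightarrow> \<exists>z. P x z \<and> y = \<phi> x z"
    "\<And>y z. S (delta y) z \<noteq> 0 \<Longrightarrow> \<exists>x. P x z \<and> y = \<phi> x z"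
    "\<And>x z. (S \<circ> V) (delta x) z = (if P x z then a x z else 0)"
proof -
  define \<sigma>V where "\<sigma>V = the_related (\<lambda>x y. \<exists>z. P x z \<and> y = \<phi> x z)"
  define \<sigma>S where "\<sigma>S = the_related (\<lambda>y z. \<exists>x. P x z \<and> y = \<phi> x z)"
  define w where "w z = (case the_related P z of None \<Rightarrow> 0 | Some x \<Rightarrow> a x z)" for z
  have \<sigma>V: "\<sigma>V y = Some x \<longleftrightarrow> (\<exists>z. P x z \<and> y = \<phi> x z)" for x y
    unfolding \<sigma>V_def by (rule the_related_eq_Some_iff) (use inj_\<phi> in blast)
  have \<sigma>S: "\<sigma>S z = Some y \<longleftrightarrow> (\<exists>x. P x z \<and> y = \<phi> x z)" for y z
    unfolding \<sigma>S_def by (rule the_related_eq_Some_iff) (use unique_x in blast)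
  have \<sigma>P: "the_related P z = Some x \<longleftrightarrow> P x z" for x z
    by (rule the_related_eq_Some_iff) (use unique_x in blast)
  have inj_V: "inj_on \<sigma>V (dom \<sigma>V)"
    unfolding \<sigma>V_def by (rule inj_on_dom_the_related) (use inj_\<phi> unique_z in blast)+
  have inj_S: "inj_on \<sigma>S (dom \<sigma>S)"
    unfolding \<sigma>S_def by (rule inj_on_dom_the_related) (use unique_x unique_z inj_\<phi> in metis)+
  have comp: "Option.bind (\<sigma>S z) \<sigma>V = the_related P z" for z
  proof (cases "\<exists>x. P x z")
    case True
    then obtain x where "P x z" by blast
    then have "\<sigma>S z = Some (\<phi> x z)" "\<sigma>V (\<phi> x z) = Some x" "the_related P z = Some x"
      using \<sigma>S \<sigma>V \<sigma>P by blast+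
    then show ?thesis by simp
  next
    case False
    then have "\<sigma>S z = None" unfolding \<sigma>S_def by (intro the_related_eq_None) blast
    then show ?thesis using the_related_eq_None[of P z] False by simp
  qed
  show thesis
  proof
    show "weighted_pullback \<sigma>V (\<lambda>_. 1) \<in> bdd_op"
      by (rule bdd_op_weighted_pullback[OF inj_V, of _ 1]) simp
    show "weighted_pullback \<sigma>S w \<in> bdd_op"
      by (rule bdd_op_weighted_pullback[OF inj_S, of _ M])
         (auto simp: w_def bounded order_trans[OF _ bounded] split: option.split)
    show "\<exists>z. P x z \<and> y = \<phi> x z" if "weighted_pullback \<sigma>V (\<lambda>_. 1) (delta x) y \<noteq> 0" for x y
      using that by (force simp: weighted_pullback_delta \<sigma>V split: if_splits)
    show "\<exists>x. P x z \<and> y = \<phi> x z" if "weighted_pullback \<sigma>S w (delta y) z \<noteq> 0" for y z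
      using that by (force simp: weighted_pullback_delta \<sigma>S split: if_splits)
    show "(weighted_pullback \<sigma>S w \<circ> weighted_pullback \<sigma>V (\<lambda>_. 1)) (delta x) z = (if P x z then a x z else 0)"
      for x z
      unfolding weighted_pullback_comp[OF inj_V] comp weighted_pullback_delta \<sigma>P
      using \<sigma>P[where x=x and z=z] by (auto simp: w_def)
  qed
qed

section \<open>Colourings of spaces of bounded geometry\<close>

function greedy_colour :: "(nat \<Rightarrow> nat \<Rightarrow> bool) \<Rightarrow> nat \<Rightarrow> nat" where
  "greedy_colour R n = (LEAST k. k \<notin> greedy_colour R ` {m. m < n \<and> R n m})"
  by auto
termination by (relation "Wellfounded.measure snd") auto

declare greedy_colour.simps [simp del]

lemma greedy_colour_props:
  assumes "card {m. m < n \<and> R n m} \<le> N"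
  shows "greedy_colour R n \<le> N" "m < n \<Longrightarrow> R n m \<Longrightarrow> greedy_colour R m \<noteq> greedy_colour R n"
proof -
  let ?used = "greedy_colour R ` {m. m < n \<and> R n m}"
  have "card ?used \<le> N"
    using card_image_le[of "{m. m < n \<and> R n m}" "greedy_colour R"] assms by simp
  moreover have "finite ?used" by simp
  ultimately have "\<not> {0..N} \<subseteq> ?used"
    using card_mono[of ?used "{0..N}"] by auto
  then obtain k where k: "k \<le> N" "k \<notin> ?used" by (auto simp: subset_iff)
  have "greedy_colour R n \<le> k"
    unfolding greedy_colour.simps[of R n] by (rule Least_le) (rule k(2))
  then show "greedy_colour R n \<le> N" using k(1) by simp
  have "greedy_colour R n \<notin> ?used"
    unfolding greedy_colour.simps[of R n] by (rule LeastI[of _ k]) (rule k(2))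
  then show "m < n \<Longrightarrow> R n m \<Longrightarrow> greedy_colour R m \<noteq> greedy_colour R n"
    by (metis (mono_tags, lifting) image_eqI mem_Collect_eq)
qed

text \<open>Greedy colouring along an enumeration: a vertex of degree at most \<open>N\<close> has at most \<open>N\<close>
  earlier neighbours, so \<open>N + 1\<close> colours suffice.\<close>

lemma bounded_degree_colouring:
  fixes R :: "'a::countable \<Rightarrow> 'a \<Rightarrow> bool"
  assumes sym: "\<And>x y. R x y \<Longrightarrow> R y x"
    and finite: "\<And>x. finite {y. R x y}" and degree: "\<And>x. card {y. R x y} \<le> N"
  obtains c :: "'a \<Rightarrow> nat" where "\<And>x. c x \<le> N" "\<And>x y. R x y \<Longrightarrow> x \<noteq> y \<Longrightarrow> c x \<noteq> c y"
proof
  define R' where "R' n m \<longleftrightarrow> R (from_nat n) (from_nat m) \<and> n \<in> range (to_nat :: 'a \<Rightarrow> nat) \<and> m \<in> range (to_nat :: 'a \<Rightarrow> nat)"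
    for n m
  have earlier: "card {m. m < to_nat x \<and> R' (to_nat x) m} \<le> N" for x :: 'a
  proof -
    have "{m. m < to_nat x \<and> R' (to_nat x) m} \<subseteq> to_nat ` {y. R x y}"
      by (auto simp: R'_def from_nat_to_nat)
    then have "card {m. m < to_nat x \<and> R' (to_nat x) m} \<le> card (to_nat ` {y. R x y})"
      by (rule card_mono[OF finite_imageI[OF finite]])
    also have "\<dots> \<le> card {y. R x y}" by (rule card_image_le[OF finite])
    finally show ?thesis using degree[of x] by linarith
  qed
  show "greedy_colour R' (to_nat x) \<le> N" for x :: 'a
    by (rule greedy_colour_props(1)[where R=R', OF earlier])
  show "greedy_colour R' (to_nat x) \<noteq> greedy_colour R' (to_nat y)" if "R x y" "x \<noteq> y" for x y :: 'a
  proof (cases "to_nat y < to_nat x")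
    case True
    then show ?thesis
      using greedy_colour_props(2)[where R=R', OF earlier True] that by (simp add: R'_def)
  next
    case False
    moreover have "to_nat x \<noteq> to_nat y" using that(2) by simp
    ultimately have "to_nat x < to_nat y" by linarith
    then show ?thesis
      using greedy_colour_props(2)[where R=R', OF earlier] sym that by (auto simp: R'_def)
  qed
qed

lemma bounded_geometry_colouring:
  fixes d :: "'a::countable \<Rightarrow> 'a \<Rightarrow> real"
  assumes bg: "bounded_geometry d" and R: "R > 0"
  obtains c :: "'a \<Rightarrow> nat" and N where "\<And>x. c x \<le> N" "\<And>x y. d x y \<le> R \<Longrightarrow> x \<noteq> y \<Longrightarrow> c x \<noteq> c y"
proof -
  obtain N where N: "\<And>x. finite {y. d x y \<le> R} \<and> card {y. d x y \<le> R} \<le> N"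
    using bg R unfolding bounded_geometry_def by blast
  have sym: "d x y \<le> R \<Longrightarrow> d y x \<le> R" for x y
    using bg unfolding bounded_geometry_def is_metric_def by metis
  obtain c where "\<And>x. c x \<le> N" "\<And>x y. d x y \<le> R \<Longrightarrow> x \<noteq> y \<Longrightarrow> c x \<noteq> c y"
    by (rule bounded_degree_colouring[of "\<lambda>x y. d x y \<le> R" N]) (use N sym in blast)+
  then show thesis by (rule that)
qed

section \<open>Metrics on disjoint unions\<close>

lemma is_metricD:
  assumes "is_metric d"
  shows "0 \<le> d x y" "d x x = 0" "d x y = d y x" "d x z \<le> d x y + d y z"
  using assms unfolding is_metric_def by blast+

lemma DmetricsD:
  assumes "\<rho> \<in> Dmetrics dX dY"
  shows "is_metric \<rho>" "\<rho> (Inl x) (Inl x') = dX x x'" "\<rho> (Inr y) (Inr y') = dY y y'"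
  using assms unfolding Dmetrics_def by auto

lemma Dmetrics_left_le:
  assumes "\<rho> \<in> Dmetrics dX dY"
  shows "dX x x' \<le> \<rho> (Inl x) (Inr y) + dY y y' + \<rho> (Inl x') (Inr y')"
proof -
  note \<rho> = DmetricsD[OF assms]
  have "dX x x' = \<rho> (Inl x) (Inl x')" using \<rho> by simp
  also have "\<dots> \<le> \<rho> (Inl x) (Inr y) + \<rho> (Inr y) (Inl x')" by (rule is_metricD(4)[OF \<rho>(1)])
  also have "\<rho> (Inr y) (Inl x') \<le> \<rho> (Inr y) (Inr y') + \<rho> (Inr y') (Inl x')" by (rule is_metricD(4)[OF \<rho>(1)])
  finally show ?thesis using \<rho> is_metricD(3)[OF \<rho>(1), of "Inr y'" "Inl x'"] by simp
qed

lemma Dmetrics_right_le: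
  assumes "\<rho> \<in> Dmetrics dX dY"
  shows "dY y y' \<le> \<rho> (Inl x) (Inr y) + dX x x' + \<rho> (Inl x') (Inr y')"
proof -
  note \<rho> = DmetricsD[OF assms]
  have "dY y y' = \<rho> (Inr y) (Inr y')" using \<rho> by simp
  also have "\<dots> \<le> \<rho> (Inr y) (Inl x) + \<rho> (Inl x) (Inr y')" by (rule is_metricD(4)[OF \<rho>(1)])
  also have "\<rho> (Inl x) (Inr y') \<le> \<rho> (Inl x) (Inl x') + \<rho> (Inl x') (Inr y')" by (rule is_metricD(4)[OF \<rho>(1)])
  finally show ?thesis using \<rho> is_metricD(3)[OF \<rho>(1), of "Inr y" "Inl x"] by simp
qed

lemma Dmetrics_diag_left [simp]:
  assumes "\<rho> \<in> Dmetrics dX dY"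
  shows "dX x x = 0"
  using is_metricD(2)[OF DmetricsD(1)[OF assms], of "Inl x"] DmetricsD(2)[OF assms, of x x] by simp

lemma Dmetrics_diag_right [simp]:
  assumes "\<rho> \<in> Dmetrics dX dY"
  shows "dY y y = 0"
  using is_metricD(2)[OF DmetricsD(1)[OF assms], of "Inr y"] DmetricsD(3)[OF assms, of y y] by simp

lemma Dmetrics_cross_ball_finite:
  assumes \<rho>: "\<rho> \<in> Dmetrics dX dY" and bg: "bounded_geometry dY"
  shows "finite {y. \<rho> (Inl x) (Inr y) < L}"
proof (cases "\<exists>y0. \<rho> (Inl x) (Inr y0) < L")
  case True
  then obtain y0 where y0: "\<rho> (Inl x) (Inr y0) < L" by blast
  have "0 < 2 * L" using y0 is_metricD(1)[OF DmetricsD(1)[OF \<rho>], of "Inl x" "Inr y0"] by linarith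
  then have "finite {y. dY y0 y \<le> 2 * L}"
    using bg unfolding bounded_geometry_def by blast
  moreover have "{y. \<rho> (Inl x) (Inr y) < L} \<subseteq> {y. dY y0 y \<le> 2 * L}"
  proof
    fix y assume "y \<in> {y. \<rho> (Inl x) (Inr y) < L}"
    then show "y \<in> {y. dY y0 y \<le> 2 * L}"
      using y0 Dmetrics_right_le[OF \<rho>, of y0 y x x] \<rho> by simp
  qed
  ultimately show ?thesis by (rule finite_subset[rotated])
qed simp

section \<open>Operators of finite propagation\<close>

lemma finite_propagationE:
  assumes "finite_propagation \<rho> T"
  obtains L where "L > 0" "\<And>x y. T (delta x) y \<noteq> 0 \<Longrightarrow> \<rho> (Inl x) (Inr y) < L"
proof -
  obtain L where L: "\<forall>x y. \<rho> (Inl x) (Inr y) \<ge> L \<longrightarrow> T (delta x) y = 0"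
    using assms unfolding finite_propagation_def entry_def by blast
  show thesis
  proof (rule that)
    show "max L 1 > 0" by simp
    fix x y assume "T (delta x) y \<noteq> 0"
    then have "\<rho> (Inl x) (Inr y) < L" using L by force
    then show "\<rho> (Inl x) (Inr y) < max L 1" by simp
  qed
qed

lemma finite_propagationI:
  "(\<And>x y. T (delta x) y \<noteq> 0 \<Longrightarrow> \<rho> (Inl x) (Inr y) < L) \<Longrightarrow> finite_propagation \<rho> T"
  unfolding finite_propagation_def entry_def by (meson not_le)

lemma op_subspace_finite_propagation: "op_subspace {T \<in> bdd_op. finite_propagation \<rho> T}"
proof -
  have "finite_propagation \<rho> (\<lambda>f y. S f y + T f y)"
    if S: "finite_propagation \<rho> S" and T: "finite_propagation \<rho> T" for S T :: "('a \<Rightarrow> complex) \<Rightarrow> ('b \<Rightarrow> complex)"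
  proof -
    obtain L1 where "L1 > 0" and L1: "\<And>x y. S (delta x) y \<noteq> 0 \<Longrightarrow> \<rho> (Inl x) (Inr y) < L1"
      by (rule finite_propagationE[OF S]) (rule that)
    obtain L2 where "L2 > 0" and L2: "\<And>x y. T (delta x) y \<noteq> 0 \<Longrightarrow> \<rho> (Inl x) (Inr y) < L2"
      by (rule finite_propagationE[OF T]) (rule that)
    show ?thesis
    proof (rule finite_propagationI[where L="max L1 L2"])
      fix x y assume "S (delta x) y + T (delta x) y \<noteq> 0"
      then have "S (delta x) y \<noteq> 0 \<or> T (delta x) y \<noteq> 0" by (cases "S (delta x) y = 0") simp_all
      then show "\<rho> (Inl x) (Inr y) < max L1 L2"
        by (elim disjE) (simp_all add: less_max_iff_disj L1 L2)
    qed
  qed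
  moreover have "finite_propagation \<rho> (\<lambda>f y. c * T f y)" if T: "finite_propagation \<rho> T"
    for c and T :: "('a \<Rightarrow> complex) \<Rightarrow> ('b \<Rightarrow> complex)"
  proof -
    obtain L where "L > 0" and L: "\<And>x y. T (delta x) y \<noteq> 0 \<Longrightarrow> \<rho> (Inl x) (Inr y) < L"
      by (rule finite_propagationE[OF T]) (rule that)
    show ?thesis by (rule finite_propagationI[where L=L]) (use L in simp)
  qed
  moreover have "finite_propagation \<rho> (\<lambda>f. \<lambda>_::'b. 0 :: complex)"
    by (rule finite_propagationI[where L=0]) simp
  ultimately show ?thesis
    unfolding op_subspace_def by (auto intro: bdd_op_zero bdd_op_add bdd_op_scale)
qed

lemma Mprop_subset_bdd_op: "Mprop \<rho> \<subseteq> bdd_op"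
  unfolding Mprop_def by (rule norm_closure_subset_bdd_op)

lemma sum_div_mod_indicator:
  fixes K a b :: nat
  assumes a: "a < K" and b: "b < K"
  shows "(\<Sum>k<K*K. if a = k div K \<and> b = k mod K then v else 0) = v"
proof -
  have "a * K + b < (a + 1) * K" using b by simp
  also have "\<dots> \<le> K * K" using a by (intro mult_right_mono) auto
  finally have lt: "a * K + b < K * K" .
  have "(a = k div K \<and> b = k mod K) \<longleftrightarrow> k = a * K + b" for k
    using b div_mult_mod_eq[of k K] by (auto simp: mult.commute)
  then show ?thesis using lt by simp
qed

section \<open>Composition of couplings\<close>

locale composable_metrics =
  fixes dX :: "'x::countable \<Rightarrow> 'x \<Rightarrow> real"
    and dY :: "'y::countable \<Rightarrow> 'y \<Rightarrow> real"
    and dZ :: "'z::countable \<Rightarrow> 'z \<Rightarrow> real"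
    and dXY :: "('x + 'y) \<Rightarrow> ('x + 'y) \<Rightarrow> real"
    and dYZ :: "('y + 'z) \<Rightarrow> ('y + 'z) \<Rightarrow> real"
  assumes bg_X: "bounded_geometry dX" and bg_Y: "bounded_geometry dY" and bg_Z: "bounded_geometry dZ"
    and XY: "dXY \<in> Dmetrics dX dY" and YZ: "dYZ \<in> Dmetrics dY dZ"
begin

abbreviation dXZ :: "('x + 'z) \<Rightarrow> ('x + 'z) \<Rightarrow> real" where
  "dXZ \<equiv> metric_comp dXY dYZ"

lemma dXY_nonneg: "0 \<le> dXY p q"
  by (rule is_metricD(1)[OF DmetricsD(1)[OF XY]])

lemma dYZ_nonneg: "0 \<le> dYZ p q"
  by (rule is_metricD(1)[OF DmetricsD(1)[OF YZ]])

lemma dXZ_bdd_below: "bdd_below (range (\<lambda>y. dXY (Inl x) (Inr y) + dYZ (Inl y) (Inr z)))"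
  by (intro bdd_belowI[of _ 0]) (auto intro: add_nonneg_nonneg dXY_nonneg dYZ_nonneg)

lemma dXZ_le: "dXZ (Inl x) (Inr z) \<le> dXY (Inl x) (Inr y) + dYZ (Inl y) (Inr z)"
  unfolding metric_comp_def by (simp add: cINF_lower[OF dXZ_bdd_below])

lemma dXZ_less_imp_midpoint:
  assumes "dXZ (Inl x) (Inr z) < L"
  obtains y where "dXY (Inl x) (Inr y) + dYZ (Inl y) (Inr z) < L"
  using assms cINF_less_iff[OF _ dXZ_bdd_below] unfolding metric_comp_def by auto

lemma dXZ_close_left:
  assumes "dXZ (Inl x) (Inr z) < L" "dXZ (Inl x') (Inr z) < L"
  shows "dX x x' < 2 * L"
proof -
  obtain y y' where y: "dXY (Inl x) (Inr y) + dYZ (Inl y) (Inr z) < L"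
    and y': "dXY (Inl x') (Inr y') + dYZ (Inl y') (Inr z) < L"
    using dXZ_less_imp_midpoint assms by metis
  have "dX x x' \<le> dXY (Inl x) (Inr y) + dY y y' + dXY (Inl x') (Inr y')"
    by (rule Dmetrics_left_le[OF XY])
  moreover have "dY y y' \<le> dYZ (Inl y) (Inr z) + dZ z z + dYZ (Inl y') (Inr z)"
    by (rule Dmetrics_left_le[OF YZ])
  ultimately show ?thesis using y y' YZ by simp
qed

lemma dXZ_close_right:
  assumes "dXZ (Inl x) (Inr z) < L" "dXZ (Inl x) (Inr z') < L"
  shows "dZ z z' < 2 * L"
proof -
  obtain y y' where y: "dXY (Inl x) (Inr y) + dYZ (Inl y) (Inr z) < L"
    and y': "dXY (Inl x) (Inr y') + dYZ (Inl y') (Inr z') < L"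
    using dXZ_less_imp_midpoint assms by metis
  have "dZ z z' \<le> dYZ (Inl y) (Inr z) + dY y y' + dYZ (Inl y') (Inr z')"
    by (rule Dmetrics_right_le[OF YZ])
  moreover have "dY y y' \<le> dXY (Inl x) (Inr y) + dX x x + dXY (Inl x) (Inr y')"
    by (rule Dmetrics_right_le[OF XY])
  ultimately show ?thesis using y y' XY by simp
qed

lemma finite_propagation_comp:
  assumes T: "finite_propagation dXY T" and S: "S \<in> bdd_op" "finite_propagation dYZ S"
  shows "finite_propagation dXZ (S \<circ> T)"
proof -
  obtain L1 where "L1 > 0" and L1: "\<And>x y. T (delta x) y \<noteq> 0 \<Longrightarrow> dXY (Inl x) (Inr y) < L1"
    by (rule finite_propagationE[OF T]) (rule that)
  obtain L2 where "L2 > 0" and L2: "\<And>y z. S (delta y) z \<noteq> 0 \<Longrightarrow> dYZ (Inl y) (Inr z) < L2"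
    by (rule finite_propagationE[OF S(2)]) (rule that)
  show ?thesis
  proof (rule finite_propagationI[where L="L1 + L2"])
    fix x z assume nonzero: "(S \<circ> T) (delta x) z \<noteq> 0"
    define B where "B = {y. dXY (Inl x) (Inr y) < L1}"
    have B: "finite B" unfolding B_def by (rule Dmetrics_cross_ball_finite[OF XY bg_Y])
    have "T (delta x) = (\<lambda>y. \<Sum>y'\<in>B. T (delta x) y' * delta y' y)"
    proof
      fix y
      show "T (delta x) y = (\<Sum>y'\<in>B. T (delta x) y' * delta y' y)"
        unfolding sum_mult_delta[OF B] using L1[of x y] by (auto simp: B_def)
    qed
    then have "(S \<circ> T) (delta x) z = (\<Sum>y\<in>B. T (delta x) y * S (delta y) z)"
      using bdd_op_sum_arg[OF S(1) B, of delta "T (delta x)"] by simp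
    then obtain y where "y \<in> B" "S (delta y) z \<noteq> 0"
      using nonzero sum.neutral[of B "\<lambda>y. T (delta x) y * S (delta y) z"] by force
    then show "dXZ (Inl x) (Inr z) < L1 + L2"
      using dXZ_le[of x z y] L2 by (fastforce simp: B_def)
  qed
qed

lemma op_tensor_subset_Mprop: "op_tensor (Mprop dXY) (Mprop dYZ) \<subseteq> Mprop dXZ"
proof -
  have "S \<circ> T \<in> Mprop dXZ" if "T \<in> Mprop dXY" "S \<in> Mprop dYZ" for S T
    using that unfolding Mprop_def
    by (rule comp_mem_norm_closure[rotated 3]) (auto intro: bdd_op_comp finite_propagation_comp)
  then have "op_cspan {S \<circ> T | S T. T \<in> Mprop dXY \<and> S \<in> Mprop dYZ} \<subseteq> Mprop dXZ"
    unfolding Mprop_def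
    by (intro op_cspan_subset op_subspace_norm_closure op_subspace_finite_propagation) blast
  then have "op_tensor (Mprop dXY) (Mprop dYZ) \<subseteq> norm_closure (Mprop dXZ)"
    unfolding op_tensor_def by (rule norm_closure_mono)
  also have "\<dots> = Mprop dXZ"
    unfolding Mprop_def by (rule norm_closure_norm_closure) blast
  finally show ?thesis .
qed

text \<open>Within one colour class the propagation bound turns the pairs \<open>(x, z)\<close> with
  \<open>dXZ x z < L\<close> into a partial matching: two such pairs sharing a point or a midpoint have
  their other ends within \<open>2L\<close>, hence of different colours unless equal.\<close>

lemma colour_class_factorization:
  assumes T: "T \<in> bdd_op"
    and cX: "\<And>x x'. dX x x' < 2 * L \<Longrightarrow> cX x = cX x' \<Longrightarrow> x = x'"
    and cZ: "\<And>z z'. dZ z z' < 2 * L \<Longrightarrow> cZ z = cZ z' \<Longrightarrow> z = z'"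
  obtains V S where "V \<in> Mprop dXY" "S \<in> Mprop dYZ"
    "\<And>x z. (S \<circ> V) (delta x) z =
       (if cX x = i \<and> cZ z = j \<and> dXZ (Inl x) (Inr z) < L then T (delta x) z else 0)"
proof -
  define P where "P x z \<longleftrightarrow> cX x = i \<and> cZ z = j \<and> dXZ (Inl x) (Inr z) < L" for x z
  obtain \<phi> where \<phi>: "\<And>x z. P x z \<Longrightarrow> dXY (Inl x) (Inr (\<phi> x z)) < L \<and> dYZ (Inl (\<phi> x z)) (Inr z) < L"
  proof -
    have "\<exists>y. dXY (Inl x) (Inr y) < L \<and> dYZ (Inl y) (Inr z) < L" if "P x z" for x z
    proof -
      from that have "dXZ (Inl x) (Inr z) < L" by (simp add: P_def)
      then obtain y where "dXY (Inl x) (Inr y) + dYZ (Inl y) (Inr z) < L"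
        by (rule dXZ_less_imp_midpoint)
      then show ?thesis
        using dXY_nonneg[of "Inl x" "Inr y"] dYZ_nonneg[of "Inl y" "Inr z"]
        by (intro exI[of _ y] conjI) linarith+
    qed
    then show thesis using that by metis
  qed
  have unique_x: "x = x'" if "P x z" "P x' z" for x x' z
    using that cX dXZ_close_left by (auto simp: P_def)
  have unique_z: "z = z'" if "P x z" "P x z'" for x z z'
    using that cZ dXZ_close_right by (auto simp: P_def)
  have inj_\<phi>: "x = x'" if "P x z" "P x' z'" "\<phi> x z = \<phi> x' z'" for x x' z z'
  proof -
    have "dX x x' \<le> dXY (Inl x) (Inr (\<phi> x z)) + dY (\<phi> x z) (\<phi> x' z') + dXY (Inl x') (Inr (\<phi> x' z'))"
      by (rule Dmetrics_left_le[OF XY])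
    then have "dX x x' < 2 * L" using \<phi>[OF that(1)] \<phi>[OF that(2)] that(3) XY by simp
    then show ?thesis using cX that by (auto simp: P_def)
  qed
  obtain V S where V: "V \<in> bdd_op" and S: "S \<in> bdd_op"
    and V_prop: "\<And>x y. V (delta x) y \<noteq> 0 \<Longrightarrow> \<exists>z. P x z \<and> y = \<phi> x z"
    and S_prop: "\<And>y z. S (delta y) z \<noteq> 0 \<Longrightarrow> \<exists>x. P x z \<and> y = \<phi> x z"
    and SV: "\<And>x z. (S \<circ> V) (delta x) z = (if P x z then T (delta x) z else 0)"
  proof (rule matching_factorization[where P=P and \<phi>=\<phi> and a="\<lambda>x z. T (delta x) z" and M="opnorm T"])
    show "\<And>x x' z. P x z \<Longrightarrow> P x' z \<Longrightarrow> x = x'" by (rule unique_x)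
    show "\<And>x z z'. P x z \<Longrightarrow> P x z' \<Longrightarrow> z = z'" by (rule unique_z)
    show "\<And>x x' z z'. P x z \<Longrightarrow> P x' z' \<Longrightarrow> \<phi> x z = \<phi> x' z' \<Longrightarrow> x = x'" by (rule inj_\<phi>)
    show "\<And>x z. cmod (T (delta x) z) \<le> opnorm T" by (rule norm_entry_le_opnorm[OF T])
  qed (rule that)
  have "finite_propagation dXY V"
    by (rule finite_propagationI[where L=L]) (use V_prop \<phi> in blast)
  moreover have "finite_propagation dYZ S"
    by (rule finite_propagationI[where L=L]) (use S_prop \<phi> in blast)
  ultimately have "V \<in> Mprop dXY" "S \<in> Mprop dYZ"
    using V S subset_norm_closure[of "{T \<in> bdd_op. finite_propagation _ T}"] unfolding Mprop_def by blast+
  then show thesis using that SV unfolding P_def by blast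
qed

lemma finite_propagation_decomposition:
  assumes T: "T \<in> bdd_op" "finite_propagation dXZ T"
  shows "T \<in> op_cspan {S \<circ> V | S V. V \<in> Mprop dXY \<and> S \<in> Mprop dYZ}"
proof -
  obtain L where L: "L > 0" and propagation: "\<And>x z. T (delta x) z \<noteq> 0 \<Longrightarrow> dXZ (Inl x) (Inr z) < L"
    by (rule finite_propagationE[OF T(2)]) (rule that)
  obtain cX :: "'x \<Rightarrow> nat" and NX where cX: "\<And>x. cX x \<le> NX" "\<And>x x'. dX x x' \<le> 2 * L \<Longrightarrow> x \<noteq> x' \<Longrightarrow> cX x \<noteq> cX x'"
    by (rule bounded_geometry_colouring[OF bg_X, of "2 * L"]) (use L in auto)
  obtain cZ :: "'z \<Rightarrow> nat" and NZ where cZ: "\<And>z. cZ z \<le> NZ" "\<And>z z'. dZ z z' \<le> 2 * L \<Longrightarrow> z \<noteq> z' \<Longrightarrow> cZ z \<noteq> cZ z'"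
    by (rule bounded_geometry_colouring[OF bg_Z, of "2 * L"]) (use L in auto)
  define K where "K = Suc (max NX NZ)"
  have K: "cX x < K" "cZ z < K" for x z
    using cX(1)[of x] cZ(1)[of z] by (auto simp: K_def)
  have "\<forall>k. \<exists>VS. fst VS \<in> Mprop dXY \<and> snd VS \<in> Mprop dYZ \<and> (\<forall>x z. (snd VS \<circ> fst VS) (delta x) z =
      (if cX x = k div K \<and> cZ z = k mod K \<and> dXZ (Inl x) (Inr z) < L then T (delta x) z else 0))"
  proof
    fix k
    have cX': "x = x'" if "dX x x' < 2 * L" "cX x = cX x'" for x x'
      using cX(2)[of x x'] that by linarith
    have cZ': "z = z'" if "dZ z z' < 2 * L" "cZ z = cZ z'" for z z'
      using cZ(2)[of z z'] that by linarith
    obtain V S where "V \<in> Mprop dXY" "S \<in> Mprop dYZ" "\<And>x z. (S \<circ> V) (delta x) z =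
        (if cX x = k div K \<and> cZ z = k mod K \<and> dXZ (Inl x) (Inr z) < L then T (delta x) z else 0)"
      by (rule colour_class_factorization[where L=L and cX=cX and cZ=cZ and i="k div K" and j="k mod K",
            OF T(1)]) (rule cX' cZ' that; assumption)+
    then show "\<exists>VS. fst VS \<in> Mprop dXY \<and> snd VS \<in> Mprop dYZ \<and> (\<forall>x z. (snd VS \<circ> fst VS) (delta x) z =
        (if cX x = k div K \<and> cZ z = k mod K \<and> dXZ (Inl x) (Inr z) < L then T (delta x) z else 0))"
      by (intro exI[of _ "(V, S)"]) simp
  qed
  then obtain VS where VS: "\<And>k. fst (VS k) \<in> Mprop dXY" "\<And>k. snd (VS k) \<in> Mprop dYZ"
    "\<And>k x z. (snd (VS k) \<circ> fst (VS k)) (delta x) z =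
      (if cX x = k div K \<and> cZ z = k mod K \<and> dXZ (Inl x) (Inr z) < L then T (delta x) z else 0)"
    by (metis choice)
  define G where "G k = snd (VS k) \<circ> fst (VS k)" for k
  define U where "U = (\<lambda>f y. \<Sum>k<K*K. (\<lambda>_. 1) k * G k f y)"
  have U: "U \<in> op_cspan {S \<circ> V | S V. V \<in> Mprop dXY \<and> S \<in> Mprop dYZ}"
    unfolding op_cspan_def U_def mem_Collect_eq
    by (intro exI[of _ "K*K"] exI[of _ "\<lambda>_. 1"] exI[of _ G] conjI refl) (use VS(1,2) in \<open>auto simp: G_def\<close>)
  moreover have "T = U"
  proof (rule bdd_op_eqI_delta[OF T(1)])
    have "{S \<circ> V | S V. V \<in> Mprop dXY \<and> S \<in> Mprop dYZ} \<subseteq> bdd_op"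
      by (blast intro: bdd_op_comp subsetD[OF Mprop_subset_bdd_op])
    with U show "U \<in> bdd_op" using op_cspan_subset[OF op_subspace_bdd_op] by blast
    fix x show "T (delta x) = U (delta x)"
    proof
      fix z
      have "U (delta x) z = (\<Sum>k<K*K. if cX x = k div K \<and> cZ z = k mod K then
             (if dXZ (Inl x) (Inr z) < L then T (delta x) z else 0) else 0)"
        unfolding U_def G_def using VS(3) by (intro sum.cong) auto
      also have "\<dots> = T (delta x) z"
        using sum_div_mod_indicator[OF K] propagation[of x z] by auto
      finally show "T (delta x) z = U (delta x) z" by simp
    qed
  qed
  ultimately show ?thesis by simp
qed

lemma Mprop_subset_op_tensor: "Mprop dXZ \<subseteq> op_tensor (Mprop dXY) (Mprop dYZ)"
  unfolding Mprop_def[of dXZ] op_tensor_def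
  by (rule norm_closure_mono) (use finite_propagation_decomposition in blast)

end

theorem mainTheorem7:
  fixes dX :: "'x::countable \<Rightarrow> 'x \<Rightarrow> real"
    and dY :: "'y::countable \<Rightarrow> 'y \<Rightarrow> real"
    and dZ :: "'z::countable \<Rightarrow> 'z \<Rightarrow> real"
    and dXY :: "('x + 'y) \<Rightarrow> ('x + 'y) \<Rightarrow> real"
    and dYZ :: "('y + 'z) \<Rightarrow> ('y + 'z) \<Rightarrow> real"
  assumes "bounded_geometry dX" and "bounded_geometry dY" and "bounded_geometry dZ"
    and "dXY \<in> Dmetrics dX dY" and "dYZ \<in> Dmetrics dY dZ"
  shows "op_tensor (Mprop dXY) (Mprop dYZ) = Mprop (metric_comp dXY dYZ)"
proof -
  interpret composable_metrics dX dY dZ dXY dYZ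
    using assms by unfold_locales
  show ?thesis
    using op_tensor_subset_Mprop Mprop_subset_op_tensor by (rule equalityI)
qed

end
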